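(* Let $X\in\mathbb{R}^d$ be a random vector with mean $\theta_0$ and covariance matrix $\Sigma_0$, and assume (A1): $\Sigma_0$ is a finite covariance matrix of full rank $d$. Let $X_1,\dots,X_n$ ($n>d$) be independent copies of $X$, let $\Theta_n$ be the interior of the convex hull of $X_1,\dots,X_n$, let $\tilde\theta=\frac1n\sum_{i=1}^n X_i$ be the sample mean, and let $l(\theta)$ be the empirical log-likelihood ratio for the mean (defined in the context). Define the composite similarity mapping $h_n^C:\Theta_n\to\mathbb{R}^d$ by $$h_n^C(\theta)=\tilde\theta+\gamma\bigl(n,l(\theta)\bigr)(\theta-\tilde\theta),\qquad \gamma\bigl(n,l(\theta)\bigr)=1+\frac{l(\theta)}{2n},\qquad \theta\in\Theta_n.$$ Then: (i) $h_n^C$ has a unique fixed point, namely $\tilde\theta$; (ii) for each $\tau\ge 0$, the restriction of $h_n^C$ to the contour $c(\tau)=\{\theta\in\Theta_n: l(\theta)=\tau\}$ coincides with the similarity mapping $\theta\mapsto\tilde\theta+\gamma(n,\tau)(\theta-\tilde\theta)$ of $\mathbb{R}^d$ (with constant expansion factor $\gamma(n,\tau)=1+\tau/(2n)$); (iii) $h_n^C$ is a bijection from $\Theta_n$ onto $\mathbb{R}^d$.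
   Context: For $\theta\in\mathbb{R}^d$, the empirical likelihood ratio is $R(\theta)=\sup\{\prod_{i=1}^n nw_i : \sum_{i=1}^n w_i(X_i-\theta)=0,\ w_i\ge 0,\ \sum_{i=1}^n w_i=1\}$ (with $R(\theta)=0$ if the constraint set is empty or only allows zero products), and $l(\theta)=-2\log R(\theta)$; one has $0<R(\theta)\le1$ iff $\theta\in\Theta_n$, so $l$ is finite exactly on $\Theta_n$, and $l(\tilde\theta)=0$. Standing convention: whenever (A1) is assumed it is also understood that the convex hull of $X_1,\dots,X_n$ is nondegenerate (i.e. $\Theta_n$ is a nonempty open set), which holds with probability one under (A1) and $n>d$. *)

theory Defs
  imports "HOL-Analysis.Analysis"
begin

text \<open>Sample X 0, ..., X (n-1) in a Euclidean space (the paper's X_1..X_n).\<close>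

definition EL_weights :: "(nat \<Rightarrow> 'a::euclidean_space) \<Rightarrow> nat \<Rightarrow> 'a \<Rightarrow> (nat \<Rightarrow> real) set" where
  "EL_weights X n \<theta> = {w. (\<forall>i<n. 0 \<le> w i) \<and> (\<Sum>i<n. w i) = 1 \<and> (\<Sum>i<n. w i *\<^sub>R (X i - \<theta>)) = 0}"

definition EL_ratio :: "(nat \<Rightarrow> 'a::euclidean_space) \<Rightarrow> nat \<Rightarrow> 'a \<Rightarrow> real" where
  "EL_ratio X n \<theta> =
     (if EL_weights X n \<theta> = {} then 0
      else Sup ((\<lambda>w. \<Prod>i<n. real n * w i) ` EL_weights X n \<theta>))"

definition EL_logratio :: "(nat \<Rightarrow> 'a::euclidean_space) \<Rightarrow> nat \<Rightarrow> 'a \<Rightarrow> real" where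
  "EL_logratio X n \<theta> = - 2 * ln (EL_ratio X n \<theta>)"

definition Theta_n :: "(nat \<Rightarrow> 'a::euclidean_space) \<Rightarrow> nat \<Rightarrow> 'a set" where
  "Theta_n X n = interior (convex hull (X ` {..<n}))"

definition sample_mean :: "(nat \<Rightarrow> 'a::euclidean_space) \<Rightarrow> nat \<Rightarrow> 'a" where
  "sample_mean X n = (1 / real n) *\<^sub>R (\<Sum>i<n. X i)"

definition gamma_EL :: "nat \<Rightarrow> real \<Rightarrow> real" where
  "gamma_EL n t = 1 + t / (2 * real n)"

definition hC :: "(nat \<Rightarrow> 'a::euclidean_space) \<Rightarrow> nat \<Rightarrow> 'a \<Rightarrow> 'a" where
  "hC X n \<theta> = sample_mean X n + gamma_EL n (EL_logratio X n \<theta>) *\<^sub>R (\<theta> - sample_mean X n)"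

end

theory Submission
  imports Defs
begin

text \<open>The empirical likelihood ratio \<open>R\<close> is log-concave (mix optimal weights and compare the
  products factor by factor), equals \<open>1\<close> exactly at the sample mean \<open>m\<close>, is positive on
  \<open>\<Theta>\<^sub>n\<close> and vanishes linearly at its boundary. Hence \<open>l = -2 ln R\<close> is convex and
  continuous on \<open>\<Theta>\<^sub>n\<close>, vanishes only at \<open>m\<close>, satisfies
  \<open>l (m + s (\<theta> - m)) \<le> s l \<theta>\<close> for \<open>0 \<le> s \<le> 1\<close>, and blows up at the boundary. So along
  each ray from \<open>m\<close> the map \<open>t \<mapsto> t \<gamma>(n, l (m + t v))\<close> increases strictly from \<open>0\<close> to
  \<open>\<infinity>\<close>, which gives injectivity and, by the intermediate value theorem, surjectivity; a
  fixed point needs \<open>\<gamma> = 1\<close>, i.e. \<open>l = 0\<close>.\<close>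

lemma ln_le_minus_one_sub_sq:
  fixes x N \<eta> :: real
  assumes "0 < x" "x \<le> N" "0 \<le> \<eta>" "\<eta> \<le> \<bar>x - 1\<bar>"
  shows "ln x \<le> x - 1 - \<eta>\<^sup>2 / (sqrt N + 1)\<^sup>2"
proof -
  define s where "s = sqrt x"
  have s: "0 < s" "s\<^sup>2 = x" "s \<le> sqrt N"
    using assms by (auto simp: s_def)
  have "ln x = 2 * ln s"
    using assms by (simp add: s_def ln_sqrt)
  also have "\<dots> \<le> 2 * (s - 1)"
    using ln_le_minus_one[OF s(1)] by simp
  finally have "ln x \<le> x - 1 - (s - 1)\<^sup>2"
    using s(2) by (simp add: power2_eq_square algebra_simps)
  moreover have "\<eta> \<le> \<bar>s - 1\<bar> * (sqrt N + 1)"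
  proof -
    have "x - 1 = (s - 1) * (s + 1)"
      using s(2) by (simp add: power2_eq_square algebra_simps)
    then have "\<eta> \<le> \<bar>s - 1\<bar> * (s + 1)"
      using assms(4) s(1) by (simp add: abs_mult)
    also have "\<dots> \<le> \<bar>s - 1\<bar> * (sqrt N + 1)"
      using s by (intro mult_left_mono) auto
    finally show ?thesis .
  qed
  then have "\<eta>\<^sup>2 \<le> (\<bar>s - 1\<bar> * (sqrt N + 1))\<^sup>2"
    using assms(3) by (intro power_mono) auto
  then have "\<eta>\<^sup>2 \<le> (s - 1)\<^sup>2 * (sqrt N + 1)\<^sup>2"
    by (simp add: power_mult_distrib)
  then have "\<eta>\<^sup>2 / (sqrt N + 1)\<^sup>2 \<le> (s - 1)\<^sup>2"
    by (simp add: divide_le_eq add_pos_nonneg)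
  ultimately show ?thesis by linarith
qed

text \<open>A quantitative AM-GM inequality; with \<open>\<eta> = 0\<close> it is plain AM-GM.\<close>

lemma prod_le_exp_neg_deviation:
  fixes x :: "nat \<Rightarrow> real"
  assumes nonneg: "\<forall>i<n. 0 \<le> x i" and sum: "(\<Sum>i<n. x i) = real n"
    and "j < n" "0 \<le> \<eta>" "\<eta> \<le> \<bar>x j - 1\<bar>"
  shows "(\<Prod>i<n. x i) \<le> exp (- (\<eta>\<^sup>2 / (sqrt (real n) + 1)\<^sup>2))"
proof (cases "\<exists>i<n. x i = 0")
  case True
  then have "(\<Prod>i<n. x i) = 0" by (intro prod_zero) auto
  then show ?thesis by (metis exp_ge_zero)
next
  case False
  with nonneg have pos: "\<forall>i<n. 0 < x i"
    by (auto simp: order.order_iff_strict)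
  define c where "c = \<eta>\<^sup>2 / (sqrt (real n) + 1)\<^sup>2"
  have le_n: "x i \<le> real n" if "i < n" for i
    using that nonneg sum member_le_sum[of i "{..<n}" x] by auto
  have "ln (x i) \<le> x i - 1 - (if i = j then c else 0)" if "i < n" for i
    using that pos le_n ln_le_minus_one[of "x i"] ln_le_minus_one_sub_sq[of "x j" "real n" \<eta>] assms
    by (auto simp: c_def)
  then have "(\<Sum>i<n. ln (x i)) \<le> (\<Sum>i<n. x i - 1 - (if i = j then c else 0))"
    by (intro sum_mono) auto
  also have "\<dots> = - c"
    using sum \<open>j < n\<close> by (simp add: sum_subtractf)
  finally have "ln (\<Prod>i<n. x i) \<le> - c"
    using pos by (subst ln_prod) auto
  moreover have "0 < (\<Prod>i<n. x i)"
    using pos by (intro prod_pos) auto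
  ultimately show ?thesis
    unfolding c_def by (metis exp_le_cancel_iff exp_ln)
qed

lemma EL_weights_iff:
  "w \<in> EL_weights X n \<theta> \<longleftrightarrow>
     (\<forall>i<n. 0 \<le> w i) \<and> (\<Sum>i<n. w i) = 1 \<and> (\<Sum>i<n. w i *\<^sub>R X i) = \<theta>"
proof -
  have "(\<Sum>i<n. w i *\<^sub>R (X i - \<theta>)) = (\<Sum>i<n. w i *\<^sub>R X i) - (\<Sum>i<n. w i) *\<^sub>R \<theta>"
    by (simp add: scaleR_diff_right sum_subtractf scaleR_sum_left)
  then show ?thesis
    unfolding EL_weights_def by auto
qed

lemma EL_weights_le_1:
  assumes "w \<in> EL_weights X n \<theta>" "i < n"
  shows "w i \<le> 1"
proof -
  have "w i \<le> (\<Sum>k<n. w k)"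
    using assms by (intro member_le_sum) (auto simp: EL_weights_iff)
  then show ?thesis
    using assms(1) by (simp add: EL_weights_iff)
qed

lemma EL_weights_convex_comb:
  assumes "w \<in> EL_weights X n a" "w' \<in> EL_weights X n b" "0 \<le> u" "0 \<le> v" "u + v = 1"
  shows "(\<lambda>i. u * w i + v * w' i) \<in> EL_weights X n (u *\<^sub>R a + v *\<^sub>R b)"
  using assms
  by (auto simp: EL_weights_iff sum.distrib scaleR_add_left scaleR_sum_right
      simp flip: sum_distrib_left)

lemma EL_weights_uniform:
  assumes "0 < n"
  shows "(\<lambda>i. 1 / real n) \<in> EL_weights X n (sample_mean X n)"
  using assms by (simp add: EL_weights_iff sample_mean_def scaleR_sum_right)

lemma convex_hull_eq_EL_weights_nonempty:
  "convex hull (X ` {..<n}) = {\<theta>. EL_weights X n \<theta> \<noteq> {}}"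
proof
  have "convex {\<theta>. EL_weights X n \<theta> \<noteq> {}}"
    unfolding convex_def using EL_weights_convex_comb by blast
  moreover have "X j \<in> {\<theta>. EL_weights X n \<theta> \<noteq> {}}" if "j < n" for j
  proof -
    have "(\<lambda>i. if i = j then 1 else 0) \<in> EL_weights X n (X j)"
      using that by (simp add: EL_weights_iff if_distrib[of "\<lambda>c. c *\<^sub>R _"] cong: if_cong)
    then show ?thesis by blast
  qed
  ultimately show "convex hull (X ` {..<n}) \<subseteq> {\<theta>. EL_weights X n \<theta> \<noteq> {}}"
    by (simp add: hull_minimal image_subset_iff)
  show "{\<theta>. EL_weights X n \<theta> \<noteq> {}} \<subseteq> convex hull (X ` {..<n})"
  proof
    fix \<theta> assume "\<theta> \<in> {\<theta>. EL_weights X n \<theta> \<noteq> {}}"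
    then obtain w where w: "w \<in> EL_weights X n \<theta>" by blast
    have "(\<Sum>i\<in>{..<n}. w i *\<^sub>R X i) \<in> convex hull (X ` {..<n})"
      using w by (intro convex_sum) (auto simp: EL_weights_iff intro: hull_inc)
    then show "\<theta> \<in> convex hull (X ` {..<n})"
      using w by (simp add: EL_weights_iff)
  qed
qed

lemma rel_interior_convex_hull_eq_positive_EL_weights:
  fixes X :: "nat \<Rightarrow> 'a::euclidean_space"
  shows "rel_interior (convex hull (X ` {..<n})) = {\<theta>. \<exists>w\<in>EL_weights X n \<theta>. \<forall>i<n. 0 < w i}"
proof -
  have "X ` {..<n} = (\<Union>i<n. {X i})" by blast
  then have "rel_interior (convex hull (X ` {..<n})) =
      {\<Sum>i<n. c i *\<^sub>R s i | c s. (\<forall>i<n. 0 < c i) \<and> sum c {..<n} = 1 \<and> (\<forall>i<n. s i = X i)}"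
    using rel_interior_convex_hull_union[of "{..<n}" "\<lambda>i. {X i}"] by (simp add: Ball_def)
  also have "\<dots> = {\<theta>. \<exists>w\<in>EL_weights X n \<theta>. \<forall>i<n. 0 < w i}"
    by (force simp: EL_weights_iff less_imp_le intro!: sum.cong)
  finally show ?thesis .
qed

lemma prod_EL_weights_le_exp_neg_deviation:
  assumes "w \<in> EL_weights X n \<theta>" "j < n" "0 \<le> \<eta>" "\<eta> \<le> \<bar>real n * w j - 1\<bar>"
  shows "(\<Prod>i<n. real n * w i) \<le> exp (- (\<eta>\<^sup>2 / (sqrt (real n) + 1)\<^sup>2))"
  using assms
  by (intro prod_le_exp_neg_deviation) (auto simp: EL_weights_iff simp flip: sum_distrib_left)

lemma prod_EL_weights_bounds:
  assumes "w \<in> EL_weights X n \<theta>"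
  shows "0 \<le> (\<Prod>i<n. real n * w i)" "(\<Prod>i<n. real n * w i) \<le> 1"
proof -
  show "0 \<le> (\<Prod>i<n. real n * w i)"
    using assms by (intro prod_nonneg) (auto simp: EL_weights_iff)
  show "(\<Prod>i<n. real n * w i) \<le> 1"
  proof (cases "n = 0")
    case False
    then show ?thesis
      using prod_EL_weights_le_exp_neg_deviation[OF assms, of 0 0] by simp
  qed simp
qed

lemma EL_ratio_ge_prod:
  assumes "w \<in> EL_weights X n \<theta>"
  shows "(\<Prod>i<n. real n * w i) \<le> EL_ratio X n \<theta>"
proof -
  have "bdd_above ((\<lambda>w. \<Prod>i<n. real n * w i) ` EL_weights X n \<theta>)"
    by (rule bdd_aboveI[of _ 1]) (auto intro: prod_EL_weights_bounds(2))
  then show ?thesis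
    using assms by (auto simp: EL_ratio_def intro: cSup_upper)
qed

lemma EL_ratio_le:
  assumes "0 \<le> B" "\<And>w. w \<in> EL_weights X n \<theta> \<Longrightarrow> (\<Prod>i<n. real n * w i) \<le> B"
  shows "EL_ratio X n \<theta> \<le> B"
  using assms by (auto simp: EL_ratio_def intro: cSup_least)

lemma EL_ratio_le_1: "EL_ratio X n \<theta> \<le> 1"
  using prod_EL_weights_bounds(2) by (intro EL_ratio_le) auto

lemma EL_ratio_nonneg: "0 \<le> EL_ratio X n \<theta>"
proof (cases "EL_weights X n \<theta> = {}")
  case False
  then obtain w where "w \<in> EL_weights X n \<theta>" by blast
  then show ?thesis
    using EL_ratio_ge_prod prod_EL_weights_bounds(1) by (meson order.trans)
qed (simp add: EL_ratio_def)

lemma EL_ratio_pos: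
  assumes "w \<in> EL_weights X n \<theta>" "\<forall>i<n. 0 < w i"
  shows "0 < EL_ratio X n \<theta>"
proof -
  have "0 < (\<Prod>i<n. real n * w i)"
    using assms(2) by (intro prod_pos) auto
  then show ?thesis
    using EL_ratio_ge_prod[OF assms(1)] by linarith
qed

lemma EL_ratio_sample_mean:
  assumes "0 < n"
  shows "EL_ratio X n (sample_mean X n) = 1"
proof (rule antisym)
  show "1 \<le> EL_ratio X n (sample_mean X n)"
    using EL_ratio_ge_prod[OF EL_weights_uniform[OF assms]] assms by simp
qed (rule EL_ratio_le_1)

lemma EL_weights_deviation:
  assumes w: "w \<in> EL_weights X n \<theta>"
  shows "\<exists>j<n. norm (\<theta> - sample_mean X n) / ((\<Sum>i<n. norm (X i)) + 1) \<le> \<bar>w j - 1 / real n\<bar>"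
proof (rule ccontr)
  define \<eta> where "\<eta> = norm (\<theta> - sample_mean X n) / ((\<Sum>i<n. norm (X i)) + 1)"
  assume "\<not> (\<exists>j<n. \<eta> \<le> \<bar>w j - 1 / real n\<bar>)"
  then have lt: "\<forall>j<n. \<bar>w j - 1 / real n\<bar> < \<eta>" by auto
  have "n \<noteq> 0"
    using w by (cases n) (auto simp: EL_weights_iff)
  with lt have "0 < \<eta>" by force
  have "\<theta> - sample_mean X n = (\<Sum>i<n. (w i - 1 / real n) *\<^sub>R X i)"
    using w by (simp add: EL_weights_iff sample_mean_def scaleR_diff_left sum_subtractf scaleR_sum_right)
  also have "norm \<dots> \<le> (\<Sum>i<n. \<bar>w i - 1 / real n\<bar> * norm (X i))"
    by (rule norm_sum[THEN order.trans]) simp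
  also have "\<dots> \<le> (\<Sum>i<n. \<eta> * norm (X i))"
    using lt by (intro sum_mono mult_right_mono) auto
  also have "\<dots> < \<eta> * ((\<Sum>i<n. norm (X i)) + 1)"
    using \<open>0 < \<eta>\<close> by (simp add: distrib_left flip: sum_distrib_left)
  also have "\<dots> = norm (\<theta> - sample_mean X n)"
    using add_nonneg_pos[OF sum_nonneg zero_less_one, of "{..<n}" "\<lambda>i. norm (X i)"]
    by (simp add: \<eta>_def)
  finally show False by simp
qed

lemma EL_ratio_lt_1:
  assumes "\<theta> \<noteq> sample_mean X n"
  shows "EL_ratio X n \<theta> < 1"
proof (cases "EL_weights X n \<theta> = {}")
  case True
  then show ?thesis by (simp add: EL_ratio_def)
next
  case False
  then have "0 < n"
    by (auto simp: EL_weights_iff)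
  define \<delta> where "\<delta> = norm (\<theta> - sample_mean X n) / ((\<Sum>i<n. norm (X i)) + 1)"
  have "0 < (\<Sum>i<n. norm (X i)) + 1"
    by (simp add: add_nonneg_pos sum_nonneg)
  then have "0 < \<delta>"
    using assms by (simp add: \<delta>_def)
  have "EL_ratio X n \<theta> \<le> exp (- ((real n * \<delta>)\<^sup>2 / (sqrt (real n) + 1)\<^sup>2))"
  proof (rule EL_ratio_le)
    fix w assume w: "w \<in> EL_weights X n \<theta>"
    then obtain j where "j < n" and "\<delta> \<le> \<bar>w j - 1 / real n\<bar>"
      using EL_weights_deviation[OF w] by (auto simp: \<delta>_def)
    moreover have "\<bar>real n * w j - 1\<bar> = \<bar>real n * (w j - 1 / real n)\<bar>"
      using \<open>0 < n\<close> by (simp add: right_diff_distrib)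
    then have "real n * \<bar>w j - 1 / real n\<bar> = \<bar>real n * w j - 1\<bar>"
      by (simp add: abs_mult)
    ultimately have "real n * \<delta> \<le> \<bar>real n * w j - 1\<bar>"
      by (metis mult_left_mono of_nat_0_le_iff)
    then show "(\<Prod>i<n. real n * w i) \<le> exp (- ((real n * \<delta>)\<^sup>2 / (sqrt (real n) + 1)\<^sup>2))"
      using prod_EL_weights_le_exp_neg_deviation[OF w \<open>j < n\<close>] \<open>0 < \<delta>\<close> by simp
  qed simp
  also have "\<dots> < 1"
  proof -
    have "0 < sqrt (real n) + 1"
      by (simp add: add_nonneg_pos)
    then show ?thesis
      using \<open>0 < n\<close> \<open>0 < \<delta>\<close> by (simp add: divide_pos_pos)
  qed
  finally show ?thesis .
qed

lemma EL_ratio_powr_le: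
  assumes "0 < u" "0 \<le> B" "\<And>w. w \<in> EL_weights X n \<theta> \<Longrightarrow> (\<Prod>i<n. real n * w i) powr u \<le> B"
  shows "EL_ratio X n \<theta> powr u \<le> B"
proof -
  have "EL_ratio X n \<theta> \<le> B powr (1 / u)"
  proof (rule EL_ratio_le)
    fix w assume w: "w \<in> EL_weights X n \<theta>"
    have "(\<Prod>i<n. real n * w i) = ((\<Prod>i<n. real n * w i) powr u) powr (1 / u)"
      using prod_EL_weights_bounds(1)[OF w] assms(1) by (simp add: powr_powr)
    also have "\<dots> \<le> B powr (1 / u)"
      using assms(1) assms(3)[OF w] by (intro powr_mono2) auto
    finally show "(\<Prod>i<n. real n * w i) \<le> B powr (1 / u)" .
  qed simp
  then have "EL_ratio X n \<theta> powr u \<le> (B powr (1 / u)) powr u"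
    using assms(1) EL_ratio_nonneg by (intro powr_mono2) auto
  also have "\<dots> = B"
    using assms(1,2) by (simp add: powr_powr)
  finally show ?thesis .
qed

text \<open>Mixing weights for \<open>a\<close> and \<open>b\<close> gives weights for the mixture of \<open>a\<close> and \<open>b\<close>;
  Young's inequality compares the products factor by factor.\<close>

lemma EL_ratio_log_concave:
  assumes "0 < u" "0 < v" "u + v = 1"
  shows "EL_ratio X n a powr u * EL_ratio X n b powr v \<le> EL_ratio X n (u *\<^sub>R a + v *\<^sub>R b)"
proof -
  define R where "R = EL_ratio X n (u *\<^sub>R a + v *\<^sub>R b)"
  have "0 \<le> R"
    by (simp add: R_def EL_ratio_nonneg)
  have prods: "(\<Prod>i<n. real n * w i) powr u * (\<Prod>i<n. real n * w' i) powr v \<le> R"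
    if w: "w \<in> EL_weights X n a" and w': "w' \<in> EL_weights X n b" for w w'
  proof -
    have young: "(real n * w i) powr u * (real n * w' i) powr v \<le> real n * (u * w i + v * w' i)"
      if "i < n" for i
    proof -
      have "0 \<le> w i" "0 \<le> w' i"
        using w w' that by (auto simp: EL_weights_iff)
      then have "(real n * w i) powr u * (real n * w' i) powr v
          \<le> u * (real n * w i) + v * (real n * w' i)"
        using assms Youngs_inequality_0[of u v "real n * w i" "real n * w' i"]
        by (cases "w i = 0 \<or> w' i = 0 \<or> n = 0") auto
      then show ?thesis
        by (simp add: algebra_simps)
    qed
    have "(\<Prod>i<n. real n * w i) powr u * (\<Prod>i<n. real n * w' i) powr v
        = (\<Prod>i<n. (real n * w i) powr u * (real n * w' i) powr v)"
      unfolding prod_powr_distrib by (rule prod.distrib[symmetric])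
    also have "\<dots> \<le> (\<Prod>i<n. real n * (u * w i + v * w' i))"
      using young by (intro prod_mono) auto
    also have "\<dots> \<le> R"
      unfolding R_def using assms
      by (intro EL_ratio_ge_prod EL_weights_convex_comb[OF w w']) auto
    finally show ?thesis .
  qed
  have half: "EL_ratio X n a powr u * (\<Prod>i<n. real n * w' i) powr v \<le> R"
    if w': "w' \<in> EL_weights X n b" for w'
  proof (cases "(\<Prod>i<n. real n * w' i) powr v = 0")
    case False
    then have pos: "0 < (\<Prod>i<n. real n * w' i) powr v" by simp
    have "EL_ratio X n a powr u \<le> R / (\<Prod>i<n. real n * w' i) powr v"
      using \<open>0 \<le> R\<close> pos prods[OF _ w'] assms(1)
      by (intro EL_ratio_powr_le) (auto simp: pos_le_divide_eq)
    then show ?thesis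
      using pos by (simp add: pos_le_divide_eq)
  qed (simp only: mult_zero_right \<open>0 \<le> R\<close>)
  show ?thesis
  proof (cases "EL_ratio X n a powr u = 0")
    case False
    then have pos: "0 < EL_ratio X n a powr u" by simp
    have "EL_ratio X n b powr v \<le> R / EL_ratio X n a powr u"
      using \<open>0 \<le> R\<close> pos half assms(2)
      by (intro EL_ratio_powr_le) (auto simp: pos_le_divide_eq mult.commute)
    then show ?thesis
      using pos by (simp add: R_def pos_le_divide_eq mult.commute)
  qed (simp add: R_def EL_ratio_nonneg)
qed

text \<open>If a hyperplane supports the sample at \<open>p\<close> and leaves \<open>X j\<close> strictly on one side, every
  weight vector for \<open>\<theta>\<close> puts mass at most \<open>(a \<bullet> \<theta> - a \<bullet> p) / (a \<bullet> X j - a \<bullet> p)\<close> on \<open>X j\<close>.\<close>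

lemma EL_ratio_le_supporting_hyperplane:
  fixes X :: "nat \<Rightarrow> 'a::euclidean_space"
  assumes support: "\<forall>i<n. a \<bullet> p \<le> a \<bullet> X i" and "j < n" and strict: "a \<bullet> p < a \<bullet> X j"
    and \<theta>: "\<theta> \<in> convex hull (X ` {..<n})"
  shows "EL_ratio X n \<theta> \<le> real n ^ (n + 1) / (a \<bullet> X j - a \<bullet> p) * (a \<bullet> \<theta> - a \<bullet> p)"
proof (rule EL_ratio_le)
  define c where "c = a \<bullet> X j - a \<bullet> p"
  have "0 < c"
    using strict by (simp add: c_def)
  have mass: "w j * c \<le> a \<bullet> \<theta> - a \<bullet> p" and mass_nonneg: "0 \<le> w j" if w: "w \<in> EL_weights X n \<theta>" for w
  proof -
    have "a \<bullet> \<theta> - a \<bullet> p = (\<Sum>i<n. w i * (a \<bullet> X i - a \<bullet> p))"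
      using w by (auto simp: EL_weights_iff inner_sum_right right_diff_distrib sum_subtractf
          simp flip: sum_distrib_right)
    also have "w j * c \<le> \<dots>"
      unfolding c_def using w \<open>j < n\<close> support by (intro member_le_sum) (auto simp: EL_weights_iff)
    finally show "w j * c \<le> a \<bullet> \<theta> - a \<bullet> p" .
    show "0 \<le> w j"
      using w \<open>j < n\<close> by (auto simp: EL_weights_iff)
  qed
  have "EL_weights X n \<theta> \<noteq> {}"
    using \<theta> convex_hull_eq_EL_weights_nonempty by blast
  then obtain w where "w \<in> EL_weights X n \<theta>" by blast
  then have "0 \<le> w j * c" "w j * c \<le> a \<bullet> \<theta> - a \<bullet> p"
    using mass mass_nonneg \<open>0 < c\<close> by auto
  then have "0 \<le> a \<bullet> \<theta> - a \<bullet> p" by linarith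
  then show "0 \<le> real n ^ (n + 1) / c * (a \<bullet> \<theta> - a \<bullet> p)"
    using \<open>0 < c\<close> by simp
  fix w assume w: "w \<in> EL_weights X n \<theta>"
  have "(\<Prod>i\<in>{..<n} - {j}. real n * w i) \<le> real n ^ n"
  proof (rule prod_le_power)
    show "0 \<le> real n * w i \<and> real n * w i \<le> real n" if "i \<in> {..<n} - {j}" for i
      using that w EL_weights_le_1[OF w, of i] mult_left_le[of "w i" "real n"]
      by (auto simp: EL_weights_iff)
    show "card ({..<n} - {j}) \<le> n" "1 \<le> real n"
      using \<open>j < n\<close> by auto
  qed
  then have "(\<Prod>i<n. real n * w i) \<le> (real n * w j) * real n ^ n"
    using \<open>j < n\<close> mass_nonneg[OF w] by (subst prod.remove[of _ j]) (auto intro: mult_left_mono)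
  also have "\<dots> = real n ^ (n + 1) / c * (w j * c)"
    using \<open>0 < c\<close> by (simp add: field_simps)
  also have "\<dots> \<le> real n ^ (n + 1) / c * (a \<bullet> \<theta> - a \<bullet> p)"
    using mass[OF w] \<open>0 < c\<close> by (intro mult_left_mono) auto
  finally show "(\<Prod>i<n. real n * w i) \<le> real n ^ (n + 1) / c * (a \<bullet> \<theta> - a \<bullet> p)" .
qed

lemma gamma_EL_mono: "s \<le> t \<Longrightarrow> gamma_EL n s \<le> gamma_EL n t"
  by (simp add: gamma_EL_def divide_right_mono)

lemma gamma_EL_eq_1_iff: "0 < n \<Longrightarrow> gamma_EL n t = 1 \<longleftrightarrow> t = 0"
  by (simp add: gamma_EL_def)

locale EL_nondegenerate =
  fixes X :: "nat \<Rightarrow> 'a::euclidean_space" and n :: nat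
  assumes Theta_n_nonempty: "Theta_n X n \<noteq> {}"
begin

abbreviation "H \<equiv> convex hull (X ` {..<n})"
abbreviation "\<Theta> \<equiv> Theta_n X n"
abbreviation "m \<equiv> sample_mean X n"
abbreviation "R \<equiv> EL_ratio X n"
abbreviation "l \<equiv> EL_logratio X n"

lemma n_pos: "0 < n"
  using Theta_n_nonempty by (auto simp: Theta_n_def)

lemma Theta_n_eq_positive_EL_weights: "\<Theta> = {\<theta>. \<exists>w\<in>EL_weights X n \<theta>. \<forall>i<n. 0 < w i}"
  using Theta_n_nonempty rel_interior_nonempty_interior[of H]
  by (simp add: Theta_n_def rel_interior_convex_hull_eq_positive_EL_weights)

lemma open_Theta_n: "open \<Theta>"
  by (simp add: Theta_n_def)

lemma convex_Theta_n: "convex \<Theta>"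
  by (simp add: Theta_n_def convex_interior)

lemma Theta_n_subset_hull: "\<Theta> \<subseteq> H"
  by (simp add: Theta_n_def interior_subset)

lemma closed_hull: "closed H"
  by (simp add: compact_imp_closed compact_convex_hull finite_imp_compact)

lemma bounded_Theta_n: "bounded \<Theta>"
  by (rule bounded_subset[OF finite_imp_bounded_convex_hull Theta_n_subset_hull]) simp

lemma closure_Theta_n_subset_hull: "closure \<Theta> \<subseteq> H"
  by (rule closure_minimal[OF Theta_n_subset_hull closed_hull])

lemma sample_mean_in_Theta_n: "m \<in> \<Theta>"
  unfolding Theta_n_eq_positive_EL_weights
  by (intro CollectI bexI[OF _ EL_weights_uniform[OF n_pos]]) (simp add: n_pos)

lemma EL_ratio_pos_on_Theta_n: "\<theta> \<in> \<Theta> \<Longrightarrow> 0 < R \<theta>"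
  by (auto simp: Theta_n_eq_positive_EL_weights intro: EL_ratio_pos)

lemma EL_logratio_nonneg: "\<theta> \<in> \<Theta> \<Longrightarrow> 0 \<le> l \<theta>"
  using EL_ratio_pos_on_Theta_n[of \<theta>] EL_ratio_le_1[of X n \<theta>] by (simp add: EL_logratio_def)

lemma EL_logratio_eq_0_iff:
  assumes "\<theta> \<in> \<Theta>"
  shows "l \<theta> = 0 \<longleftrightarrow> \<theta> = m"
proof -
  have "l \<theta> = 0 \<longleftrightarrow> R \<theta> = 1"
    using EL_ratio_pos_on_Theta_n[OF assms] by (simp add: EL_logratio_def)
  also have "\<dots> \<longleftrightarrow> \<theta> = m"
    using EL_ratio_lt_1[of \<theta> X n] EL_ratio_sample_mean[OF n_pos] by force
  finally show ?thesis .
qed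

lemma convex_on_EL_logratio: "convex_on \<Theta> l"
proof (rule convex_onI)
  fix t :: real and x y assume t: "0 < t" "t < 1" and "x \<in> \<Theta>" "y \<in> \<Theta>"
  then have "(1 - t) *\<^sub>R x + t *\<^sub>R y \<in> \<Theta>"
    using convex_Theta_n by (simp add: convex_def)
  then have "0 < R x" "0 < R y" "0 < R ((1 - t) *\<^sub>R x + t *\<^sub>R y)"
    using \<open>x \<in> \<Theta>\<close> \<open>y \<in> \<Theta>\<close> by (auto intro: EL_ratio_pos_on_Theta_n)
  then have "(1 - t) * ln (R x) + t * ln (R y) = ln (R x powr (1 - t) * R y powr t)"
    by (simp add: ln_mult)
  also have "\<dots> \<le> ln (R ((1 - t) *\<^sub>R x + t *\<^sub>R y))"
    using t \<open>0 < R x\<close> \<open>0 < R y\<close> \<open>0 < R ((1 - t) *\<^sub>R x + t *\<^sub>R y)\<close>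
    by (subst ln_le_cancel_iff) (auto simp: EL_ratio_log_concave)
  finally show "l ((1 - t) *\<^sub>R x + t *\<^sub>R y) \<le> (1 - t) * l x + t * l y"
    by (simp add: EL_logratio_def)
qed (rule convex_Theta_n)

lemma continuous_on_EL_logratio: "continuous_on \<Theta> l"
  by (rule convex_on_continuous[OF open_Theta_n convex_on_EL_logratio])

lemma EL_logratio_shrink:
  assumes "\<theta> \<in> \<Theta>" "0 \<le> s" "s \<le> 1"
  shows "m + s *\<^sub>R (\<theta> - m) \<in> \<Theta>" "l (m + s *\<^sub>R (\<theta> - m)) \<le> s * l \<theta>"
proof -
  have eq: "m + s *\<^sub>R (\<theta> - m) = (1 - s) *\<^sub>R m + s *\<^sub>R \<theta>"
    by (simp add: algebra_simps)
  show "m + s *\<^sub>R (\<theta> - m) \<in> \<Theta>"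
    unfolding eq using convex_Theta_n sample_mean_in_Theta_n assms
    by (simp add: convex_def)
  show "l (m + s *\<^sub>R (\<theta> - m)) \<le> s * l \<theta>"
    unfolding eq using convex_onD[OF convex_on_EL_logratio, of s m \<theta>] assms sample_mean_in_Theta_n
      EL_logratio_eq_0_iff[OF sample_mean_in_Theta_n] by simp
qed

text \<open>A supporting hyperplane at \<open>p\<close> cannot contain all sample points, because it separates
  \<open>p\<close> from \<open>m\<close>.\<close>

lemma EL_ratio_le_dist_frontier:
  assumes "p \<in> H" "p \<notin> \<Theta>"
  obtains C where "\<forall>\<theta>\<in>\<Theta>. R \<theta> \<le> C * dist \<theta> p"
proof -
  have ri: "rel_interior H = \<Theta>"
    using Theta_n_nonempty rel_interior_nonempty_interior[of H] by (simp add: Theta_n_def)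
  have closure: "closure H = H"
    by (rule closure_closed[OF closed_hull])
  obtain a where "a \<noteq> 0" and support: "\<And>y. y \<in> closure H \<Longrightarrow> a \<bullet> p \<le> a \<bullet> y"
      and strict: "\<And>y. y \<in> rel_interior H \<Longrightarrow> a \<bullet> p < a \<bullet> y"
    by (rule supporting_hyperplane_relative_frontier[OF convex_convex_hull, of p])
      (use assms closure ri in auto)
  note support = support[unfolded closure] and strict = strict[unfolded ri]
  have "\<exists>j<n. a \<bullet> p < a \<bullet> X j"
  proof (rule ccontr)
    assume "\<not> ?thesis"
    then have "(\<Sum>j<n. a \<bullet> X j) \<le> (\<Sum>j<n. a \<bullet> p)"
      by (intro sum_mono) auto
    moreover have "a \<bullet> m = (\<Sum>j<n. a \<bullet> X j) / real n"
      by (simp add: sample_mean_def inner_sum_right)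
    ultimately have "a \<bullet> m \<le> a \<bullet> p"
      using n_pos by (simp add: divide_le_eq mult.commute)
    then show False
      using strict[OF sample_mean_in_Theta_n] by simp
  qed
  then obtain j where "j < n" "a \<bullet> p < a \<bullet> X j" by blast
  define C where "C = real n ^ (n + 1) / (a \<bullet> X j - a \<bullet> p)"
  have "0 \<le> C"
    using \<open>a \<bullet> p < a \<bullet> X j\<close> by (simp add: C_def)
  have support_sample: "\<forall>i<n. a \<bullet> p \<le> a \<bullet> X i"
    using support by (simp add: hull_inc)
  have "R \<theta> \<le> (C * norm a) * dist \<theta> p" if "\<theta> \<in> \<Theta>" for \<theta>
  proof -
    have "\<theta> \<in> H"
      using that Theta_n_subset_hull by blast
    then have "R \<theta> \<le> C * (a \<bullet> \<theta> - a \<bullet> p)"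
      unfolding C_def by (rule EL_ratio_le_supporting_hyperplane[OF support_sample \<open>j < n\<close> \<open>a \<bullet> p < a \<bullet> X j\<close>])
    also have "\<dots> \<le> C * (norm a * dist \<theta> p)"
    proof (rule mult_left_mono[OF _ \<open>0 \<le> C\<close>])
      have "a \<bullet> \<theta> - a \<bullet> p \<le> \<bar>a \<bullet> (\<theta> - p)\<bar>"
        by (simp add: inner_diff_right)
      also have "\<dots> \<le> norm a * dist \<theta> p"
        using Cauchy_Schwarz_ineq2[of a "\<theta> - p"] by (simp add: dist_norm)
      finally show "a \<bullet> \<theta> - a \<bullet> p \<le> norm a * dist \<theta> p" .
    qed
    finally show ?thesis by simp
  qed
  then show ?thesis
    using that[of "C * norm a"] by blast
qed

lemma EL_logratio_ge_near_frontier: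
  assumes "p \<in> H" "p \<notin> \<Theta>"
  obtains e where "0 < e" "\<And>\<theta>. \<theta> \<in> \<Theta> \<Longrightarrow> dist \<theta> p < e \<Longrightarrow> B \<le> l \<theta>"
proof -
  obtain C where C: "\<forall>\<theta>\<in>\<Theta>. R \<theta> \<le> C * dist \<theta> p"
    using EL_ratio_le_dist_frontier[OF assms] by blast
  define e where "e = exp (- B / 2) / (\<bar>C\<bar> + 1)"
  have "B \<le> l \<theta>" if "\<theta> \<in> \<Theta>" "dist \<theta> p < e" for \<theta>
  proof -
    have "R \<theta> \<le> C * dist \<theta> p"
      using C that by blast
    also have "\<dots> \<le> \<bar>C\<bar> * dist \<theta> p"
      by (intro mult_right_mono) auto
    also have "\<dots> \<le> \<bar>C\<bar> * e"
      using that by (intro mult_left_mono) auto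
    also have "\<dots> = \<bar>C\<bar> / (\<bar>C\<bar> + 1) * exp (- B / 2)"
      by (simp add: e_def)
    also have "\<dots> \<le> exp (- B / 2)"
      by (intro mult_left_le_one_le) auto
    finally have "R \<theta> \<le> exp (- B / 2)" .
    then have "ln (R \<theta>) \<le> - B / 2"
      using EL_ratio_pos_on_Theta_n[OF that(1)] by (metis exp_gt_zero ln_exp ln_le_cancel_iff)
    then show ?thesis
      by (simp add: EL_logratio_def)
  qed
  moreover have "0 < e"
    by (simp add: e_def add_nonneg_pos)
  ultimately show ?thesis using that by blast
qed


lemma hC_fixed_points: "{\<theta> \<in> \<Theta>. hC X n \<theta> = \<theta>} = {m}"
proof -
  have "hC X n \<theta> = \<theta> \<longleftrightarrow> \<theta> = m" if "\<theta> \<in> \<Theta>" for \<theta>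
  proof -
    have "hC X n \<theta> - \<theta> = (gamma_EL n (l \<theta>) - 1) *\<^sub>R (\<theta> - m)"
      by (simp add: hC_def algebra_simps)
    then have "hC X n \<theta> = \<theta> \<longleftrightarrow> gamma_EL n (l \<theta>) = 1 \<or> \<theta> = m"
      by auto
    then show ?thesis
      using gamma_EL_eq_1_iff[OF n_pos] EL_logratio_eq_0_iff[OF that] by blast
  qed
  then show ?thesis
    using sample_mean_in_Theta_n by blast
qed

lemma gamma_EL_logratio_shrink_le:
  assumes "\<theta> \<in> \<Theta>" "0 \<le> s" "s \<le> 1"
  shows "gamma_EL n (l (m + s *\<^sub>R (\<theta> - m))) \<le> gamma_EL n (l \<theta>)"
proof (rule gamma_EL_mono)
  have "l (m + s *\<^sub>R (\<theta> - m)) \<le> s * l \<theta>"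
    by (rule EL_logratio_shrink(2)[OF assms])
  also have "\<dots> \<le> l \<theta>"
    using assms EL_logratio_nonneg[OF assms(1)] by (simp add: mult_left_le_one_le)
  finally show "l (m + s *\<^sub>R (\<theta> - m)) \<le> l \<theta>" .
qed

text \<open>Two points with the same image lie on a common ray from \<open>m\<close>, and the expansion factor
  does not decrease outwards along rays, which forces the scaling ratio between them to be \<open>1\<close>.\<close>

lemma inj_on_hC: "inj_on (hC X n) \<Theta>"
proof (rule inj_onI)
  fix x y assume "x \<in> \<Theta>" "y \<in> \<Theta>" and eq: "hC X n x = hC X n y"
  define g where "g z = gamma_EL n (l z)" for z
  have "1 \<le> g x" "1 \<le> g y"
    using EL_logratio_nonneg \<open>x \<in> \<Theta>\<close> \<open>y \<in> \<Theta>\<close> by (auto simp: g_def gamma_EL_def)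
  have scaled: "g x *\<^sub>R (x - m) = g y *\<^sub>R (y - m)"
    using eq by (simp add: hC_def g_def)
  have "y - m = (1 / g y) *\<^sub>R (g y *\<^sub>R (y - m))"
    using \<open>1 \<le> g y\<close> by simp
  then have y: "y - m = (g x / g y) *\<^sub>R (x - m)"
    by (simp flip: scaled)
  have "x - m = (1 / g x) *\<^sub>R (g x *\<^sub>R (x - m))"
    using \<open>1 \<le> g x\<close> by simp
  then have x: "x - m = (g y / g x) *\<^sub>R (y - m)"
    by (simp add: scaled)
  have y_ray: "m + (g x / g y) *\<^sub>R (x - m) = y"
    unfolding y[symmetric] by simp
  have x_ray: "m + (g y / g x) *\<^sub>R (y - m) = x"
    unfolding x[symmetric] by simp
  have "g x = g y"
  proof (cases "g x \<le> g y")
    case True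
    then have "g y \<le> g x"
      using gamma_EL_logratio_shrink_le[OF \<open>x \<in> \<Theta>\<close>, of "g x / g y", unfolded y_ray]
        \<open>1 \<le> g x\<close> \<open>1 \<le> g y\<close> by (simp add: g_def)
    then show ?thesis using True by simp
  next
    case False
    then have "g x \<le> g y"
      using gamma_EL_logratio_shrink_le[OF \<open>y \<in> \<Theta>\<close>, of "g y / g x", unfolded x_ray]
        \<open>1 \<le> g x\<close> \<open>1 \<le> g y\<close> by (simp add: g_def)
    then show ?thesis using False by simp
  qed
  then show "x = y"
    using y_ray \<open>1 \<le> g y\<close> by simp
qed

text \<open>Follow the ray from \<open>m\<close> in direction \<open>v\<close> until it leaves \<open>\<Theta>\<close> at a point \<open>p\<close> of its
  frontier; near \<open>p\<close> the log-likelihood ratio, hence the expansion factor, is as large as we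
  please.\<close>

lemma hC_ray_overshoot:
  assumes "v \<noteq> 0"
  obtains t where "0 < t" "\<And>s. 0 \<le> s \<Longrightarrow> s \<le> t \<Longrightarrow> m + s *\<^sub>R v \<in> \<Theta>"
    "1 \<le> t * gamma_EL n (l (m + t *\<^sub>R v))"
proof -
  obtain T where "0 < T" and frontier: "m + T *\<^sub>R v \<in> frontier \<Theta>"
    and ray: "\<And>s. 0 \<le> s \<Longrightarrow> s < T \<Longrightarrow> m + s *\<^sub>R v \<in> \<Theta>"
    using ray_to_frontier[OF bounded_Theta_n _ assms] sample_mean_in_Theta_n open_Theta_n
    by (metis interior_open)
  define p where "p = m + T *\<^sub>R v"
  have "p \<in> H" "p \<notin> \<Theta>"
    using frontier closure_Theta_n_subset_hull open_Theta_n
    by (auto simp: p_def frontier_def interior_open)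
  then obtain e where "0 < e" and large: "\<And>\<theta>. \<theta> \<in> \<Theta> \<Longrightarrow> dist \<theta> p < e \<Longrightarrow> 4 * real n / T \<le> l \<theta>"
    by (rule EL_logratio_ge_near_frontier[where B = "4 * real n / T"]) blast
  define t where "t = max (T / 2) (T - e / (2 * norm v))"
  have t: "0 < t" "T / 2 \<le> t" "t < T"
    using \<open>0 < T\<close> \<open>0 < e\<close> assms by (auto simp: t_def)
  have "dist (m + t *\<^sub>R v) p = (T - t) * norm v"
    using t by (simp add: p_def dist_norm flip: scaleR_diff_left)
  also have "\<dots> \<le> e / 2"
    using assms \<open>0 < e\<close> by (simp add: t_def max_def field_simps)
  finally have "4 * real n / T \<le> l (m + t *\<^sub>R v)"
    using large ray t \<open>0 < e\<close> by simp
  then have "1 + 2 / T \<le> gamma_EL n (l (m + t *\<^sub>R v))"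
    using n_pos by (simp add: gamma_EL_def field_simps)
  then have "T / 2 * (1 + 2 / T) \<le> t * gamma_EL n (l (m + t *\<^sub>R v))"
    using t \<open>0 < T\<close> by (intro mult_mono) (auto simp: add_pos_nonneg)
  moreover have "T / 2 * (1 + 2 / T) = T / 2 + 1"
    using \<open>0 < T\<close> by (simp add: field_simps)
  ultimately have overshoot: "1 \<le> t * gamma_EL n (l (m + t *\<^sub>R v))"
    using \<open>0 < T\<close> by linarith
  have "m + s *\<^sub>R v \<in> \<Theta>" if "0 \<le> s" "s \<le> t" for s
    using ray that t by simp
  then show ?thesis
    using overshoot by (rule that[OF \<open>0 < t\<close>])
qed

lemma hC_image: "hC X n ` \<Theta> = UNIV"
proof -
  have "y \<in> hC X n ` \<Theta>" for y
  proof (cases "y = m")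
    case True
    then show ?thesis
      using sample_mean_in_Theta_n by (force simp: hC_def)
  next
    case False
    define v where "v = y - m"
    define f where "f s = s * gamma_EL n (l (m + s *\<^sub>R v))" for s
    obtain t where "0 < t" and ray: "\<And>s. 0 \<le> s \<Longrightarrow> s \<le> t \<Longrightarrow> m + s *\<^sub>R v \<in> \<Theta>"
      and "1 \<le> f t"
      using hC_ray_overshoot[of v] False by (auto simp: v_def f_def)
    have "continuous_on {0..t} (\<lambda>s. l (m + s *\<^sub>R v))"
      using ray by (intro continuous_on_compose2[OF continuous_on_EL_logratio]) (auto intro!: continuous_intros)
    then have "continuous_on {0..t} f"
      using n_pos unfolding f_def gamma_EL_def by (intro continuous_intros) auto
    then obtain s where "0 \<le> s" "s \<le> t" "f s = 1"
      using IVT'[of f 0 1 t] \<open>1 \<le> f t\<close> \<open>0 < t\<close> by (auto simp: f_def)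
    moreover have "hC X n (m + s *\<^sub>R v) = m + f s *\<^sub>R v"
      by (simp add: hC_def f_def mult.commute)
    ultimately have "hC X n (m + s *\<^sub>R v) = y"
      by (simp add: v_def)
    then show ?thesis
      using ray \<open>0 \<le> s\<close> \<open>s \<le> t\<close> by blast
  qed
  then show ?thesis by blast
qed

end

theorem theorem1:
  fixes X :: "nat \<Rightarrow> 'a::euclidean_space" and n :: nat
  assumes "n > DIM('a)"
    and "Theta_n X n \<noteq> {}"
  shows "{\<theta> \<in> Theta_n X n. hC X n \<theta> = \<theta>} = {sample_mean X n} \<and>
         (\<forall>\<tau>\<ge>0. \<forall>\<theta>\<in>Theta_n X n. EL_logratio X n \<theta> = \<tau> \<longrightarrow>
           hC X n \<theta> = sample_mean X n + gamma_EL n \<tau> *\<^sub>R (\<theta> - sample_mean X n)) \<and>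
         bij_betw (hC X n) (Theta_n X n) UNIV"
proof -
  \<comment> \<open>\<open>n > DIM('a)\<close> only makes nondegeneracy almost sure in the paper; here nondegeneracy
    is assumed outright and implies \<open>n > 0\<close>.\<close>
  interpret EL_nondegenerate X n
    using assms(2) by unfold_locales
  have contour: "\<forall>\<tau>\<ge>0. \<forall>\<theta>\<in>\<Theta>. l \<theta> = \<tau> \<longrightarrow> hC X n \<theta> = m + gamma_EL n \<tau> *\<^sub>R (\<theta> - m)"
    by (simp add: hC_def)
  have "bij_betw (hC X n) \<Theta> UNIV"
    using inj_on_hC hC_image by (simp add: bij_betw_def)
  with hC_fixed_points contour show ?thesis
    by (intro conjI)
qed

end
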